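(* (i) If $p$ is negligible to double factorial, then so is $q(x)=\int_0^xp(y)dy$. (ii) The set of power series negligible to double factorial is closed under addition, differentiation, scalar multiplication and multiplication; hence if $p$ is negligible to double factorial, then every $q\in\mathcal A_D(p)$ is negligible to double factorial. (iii) If $p(x)=\sum p_kx^k$ is negligible to double factorial and $c$ is a constant, then $q(x)=\sum p_kc^kx^k$ is negligible to double factorial. (iv) If $p$ is negligible to double factorial, then so is $|p|$.
   Context: Power series have real coefficients. $p=\sum p_kx^k$ is negligible to double factorial if $\limsup_{k\to\infty}(|p_k|(k-1)!!)^{1/k}=0$, with $(-1)!!=0!!=1$. $|p|(x):=\sum_k|p_k|x^k$. $\mathcal A_D(p)$ is the $\mathbb{R}$-algebra generated by $\{p,p',p'',\dots\}$, i.e. all finite sums $\sum_sc_sf_{s,1}\cdots f_{s,m_s}$ with $c_s\in\mathbb{R}$, $m_s\in\mathbb N$ (empty product $=1$), each $f_{s,i}$ a derivative of $p$ of some order. *)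

theory Defs
  imports Complex_Main "HOL-Library.Extended_Real" "HOL-Library.Liminf_Limsup" "HOL-Computational_Algebra.Formal_Power_Series"
begin

fun dfact :: "nat \<Rightarrow> nat" where
  "dfact 0 = 1"
| "dfact (Suc 0) = 1"
| "dfact (Suc (Suc n)) = Suc (Suc n) * dfact n"

definition dfact_pred :: "nat \<Rightarrow> nat" where
  "dfact_pred k = (if k = 0 then 1 else dfact (k - 1))"

definition negligible_dfact :: "real fps \<Rightarrow> bool" where
  "negligible_dfact p \<longleftrightarrow>
     limsup (\<lambda>k. ereal (root k (abs (fps_nth p k) * real (dfact_pred k)))) = 0"

definition fps_abs :: "real fps \<Rightarrow> real fps" where
  "fps_abs p = Abs_fps (\<lambda>k. abs (fps_nth p k))"

inductive_set alg_D :: "real fps \<Rightarrow> real fps set" for p :: "real fps" where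
  deriv: "(fps_deriv ^^ n) p \<in> alg_D p"
| const: "fps_const c \<in> alg_D p"
| add: "f \<in> alg_D p \<Longrightarrow> g \<in> alg_D p \<Longrightarrow> f + g \<in> alg_D p"
| mult: "f \<in> alg_D p \<Longrightarrow> g \<in> alg_D p \<Longrightarrow> f * g \<in> alg_D p"

end

theory Submission
  imports Defs
begin

text \<open>
  With \<open>a\<^sub>k = |p\<^sub>k| (k - 1)!!\<close>, negligibility says that \<open>a\<^sub>k = O(e\<^sup>k)\<close> for every \<open>e > 0\<close>.
  This decay survives sums, index shifts, Cauchy products and multiplication by factors of
  at most exponential growth. The double factorial only contributes such factors:
  \<open>k!! \<le> (k + 1) (k - 1)!!\<close>, \<open>(k - 1)!!\<close> is increasing, and
  \<open>(i + j - 1)!! \<le> 2\<^sup>i\<^sup>+\<^sup>j (i - 1)!! (j - 1)!!\<close>, which follows after squaring from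
  \<open>(k - 1)!!\<^sup>2 \<le> k! \<le> 2\<^sup>k (k - 1)!!\<^sup>2\<close> and \<open>(i + j)! \<le> 2\<^sup>i\<^sup>+\<^sup>j i! j!\<close>.
\<close>

section \<open>Sequences dominated by every exponential\<close>

definition superexp_decay :: "(nat \<Rightarrow> real) \<Rightarrow> bool" where
  "superexp_decay a \<longleftrightarrow> (\<forall>e>0. \<exists>C. \<forall>k. \<bar>a k\<bar> \<le> C * e ^ k)"

lemma superexp_decayD:
  assumes "superexp_decay a" "e > 0"
  obtains C where "C \<ge> 0" "\<And>k. \<bar>a k\<bar> \<le> C * e ^ k"
proof -
  obtain C where C: "\<And>k. \<bar>a k\<bar> \<le> C * e ^ k"
    using assms unfolding superexp_decay_def by blast
  have "C \<ge> 0"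
    using C[of 0] by simp
  then show ?thesis
    using C that by blast
qed

lemma superexp_decay_iff_eventually:
  "superexp_decay a \<longleftrightarrow> (\<forall>e>0. eventually (\<lambda>k. \<bar>a k\<bar> < e ^ k) sequentially)"
proof (intro iffI allI impI)
  fix e :: real
  assume "superexp_decay a" "e > 0"
  then obtain C where C: "\<And>k. \<bar>a k\<bar> \<le> C * (e / 2) ^ k"
    using superexp_decayD[of a "e / 2"] by (metis half_gt_zero)
  have "(\<lambda>k. C * (1 / 2) ^ k) \<longlonglongrightarrow> C * 0"
    by (intro tendsto_mult tendsto_const LIMSEQ_power_zero) simp
  then have "eventually (\<lambda>k. C * (1 / 2) ^ k < 1) sequentially"
    by (rule order_tendstoD) simp
  then show "eventually (\<lambda>k. \<bar>a k\<bar> < e ^ k) sequentially"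
  proof eventually_elim
    case (elim k)
    have "\<bar>a k\<bar> \<le> (C * (1 / 2) ^ k) * e ^ k"
      using C[of k] by (simp add: power_divide)
    also have "\<dots> < e ^ k"
      using elim \<open>e > 0\<close> by simp
    finally show ?case .
  qed
next
  assume ev: "\<forall>e>0. eventually (\<lambda>k. \<bar>a k\<bar> < e ^ k) sequentially"
  show "superexp_decay a"
    unfolding superexp_decay_def
  proof (intro allI impI)
    fix e :: real
    assume "e > 0"
    then obtain N where N: "\<And>k. k \<ge> N \<Longrightarrow> \<bar>a k\<bar> < e ^ k"
      using ev by (auto simp: eventually_sequentially)
    define S where "S = (\<Sum>i<N. \<bar>a i\<bar> / e ^ i)"
    have "\<bar>a k\<bar> \<le> (1 + S) * e ^ k" for k
    proof (cases "k < N")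
      case True
      have "\<bar>a k\<bar> / e ^ k \<le> S"
        unfolding S_def using True \<open>e > 0\<close> by (intro member_le_sum) auto
      then show ?thesis
        using \<open>e > 0\<close> by (simp add: divide_le_eq distrib_right add_increasing)
    next
      case False
      have "S \<ge> 0"
        unfolding S_def using \<open>e > 0\<close> by (intro sum_nonneg) simp
      then show ?thesis
        using N[of k] False \<open>e > 0\<close> by (simp add: distrib_right add_increasing2)
    qed
    then show "\<exists>C. \<forall>k. \<bar>a k\<bar> \<le> C * e ^ k" by blast
  qed
qed

lemma limsup_root_eq_0_iff_superexp_decay:
  assumes nonneg: "\<And>k. 0 \<le> a k"
  shows "limsup (\<lambda>k. ereal (root k (a k))) = 0 \<longleftrightarrow> superexp_decay a"
proof -
  have root_less_iff: "root k (a k) < e \<longleftrightarrow> \<bar>a k\<bar> < e ^ k" if "k > 0" "e > 0" for k e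
    using real_root_less_iff[of k "a k" "e ^ k"] real_root_power_cancel[of k e] that nonneg[of k]
    by simp
  have "limsup (\<lambda>k. ereal (root k (a k))) \<ge> 0"
    using nonneg by (intro le_Limsup always_eventually) (auto intro: real_root_ge_zero)
  then have "limsup (\<lambda>k. ereal (root k (a k))) = 0 \<longleftrightarrow>
      (\<forall>y>0. eventually (\<lambda>k. ereal (root k (a k)) < y) sequentially)"
    using Limsup_le_iff[where C = 0 and F = sequentially and X = "\<lambda>k. ereal (root k (a k))"] by auto
  also have "\<dots> \<longleftrightarrow> (\<forall>e>0. eventually (\<lambda>k. root k (a k) < e) sequentially)"
  proof safe
    fix e :: real
    assume ev: "\<forall>y>0. eventually (\<lambda>k. ereal (root k (a k)) < y) sequentially" and "e > 0"
    then show "eventually (\<lambda>k. root k (a k) < e) sequentially"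
      using ev[rule_format, of "ereal e"] by simp
  next
    fix y :: ereal
    assume ev: "\<forall>e>0. eventually (\<lambda>k. root k (a k) < e) sequentially" and "y > 0"
    then obtain e where "0 < e" and e_y: "ereal e < y"
      using ereal_dense2 by force
    with ev have "eventually (\<lambda>k. root k (a k) < e) sequentially"
      by blast
    then show "eventually (\<lambda>k. ereal (root k (a k)) < y) sequentially"
      by eventually_elim (rule less_trans[OF _ e_y], simp)
  qed
  also have "\<dots> \<longleftrightarrow> (\<forall>e>0. eventually (\<lambda>k. \<bar>a k\<bar> < e ^ k) sequentially)"
  proof -
    have "eventually (\<lambda>k. root k (a k) < e) sequentially \<longleftrightarrow>
        eventually (\<lambda>k. \<bar>a k\<bar> < e ^ k) sequentially" if "e > 0" for e
      using eventually_gt_at_top[of 0] by (rule eventually_cong) (simp add: root_less_iff that)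
    then show ?thesis by auto
  qed
  finally show ?thesis
    by (simp only: superexp_decay_iff_eventually)
qed

lemma superexp_decay_mono:
  assumes "superexp_decay a" "\<And>k. \<bar>b k\<bar> \<le> \<bar>a k\<bar>"
  shows "superexp_decay b"
  using assms unfolding superexp_decay_def by (meson order_trans)

lemma superexp_decay_add:
  assumes "superexp_decay a" "superexp_decay b"
  shows "superexp_decay (\<lambda>k. a k + b k)"
  unfolding superexp_decay_def
proof (intro allI impI)
  fix e :: real
  assume "e > 0"
  then obtain C D where C: "\<And>k. \<bar>a k\<bar> \<le> C * e ^ k" and D: "\<And>k. \<bar>b k\<bar> \<le> D * e ^ k"
    using assms superexp_decayD by metis
  have "\<bar>a k + b k\<bar> \<le> (C + D) * e ^ k" for k
    using abs_triangle_ineq[of "a k" "b k"] C[of k] D[of k] by (simp add: distrib_right)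
  then show "\<exists>C. \<forall>k. \<bar>a k + b k\<bar> \<le> C * e ^ k" by blast
qed

lemma superexp_decay_mult_exp_bounded:
  assumes "superexp_decay a" "\<And>k. \<bar>f k\<bar> \<le> B * r ^ k"
  shows "superexp_decay (\<lambda>k. f k * a k)"
  unfolding superexp_decay_def
proof (intro allI impI)
  fix e :: real
  assume "e > 0"
  define e' where "e' = e / (\<bar>r\<bar> + 1)"
  have "e' > 0" "\<bar>r\<bar> * e' \<le> e"
    using \<open>e > 0\<close> by (auto simp: e'_def field_simps)
  then obtain C where "C \<ge> 0" and C: "\<And>k. \<bar>a k\<bar> \<le> C * e' ^ k"
    using assms(1) superexp_decayD by metis
  have "\<bar>f k * a k\<bar> \<le> (\<bar>B\<bar> * C) * e ^ k" for k
  proof -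
    have "\<bar>f k\<bar> \<le> \<bar>B\<bar> * \<bar>r\<bar> ^ k"
      using assms(2)[of k] abs_ge_self[of "B * r ^ k"] by (simp add: abs_mult power_abs)
    then have "\<bar>f k * a k\<bar> \<le> (\<bar>B\<bar> * \<bar>r\<bar> ^ k) * (C * e' ^ k)"
      unfolding abs_mult using C[of k] by (intro mult_mono) auto
    also have "\<dots> = (\<bar>B\<bar> * C) * (\<bar>r\<bar> * e') ^ k"
      by (simp add: power_mult_distrib)
    also have "\<dots> \<le> (\<bar>B\<bar> * C) * e ^ k"
      using \<open>e' > 0\<close> \<open>\<bar>r\<bar> * e' \<le> e\<close> \<open>C \<ge> 0\<close> by (intro mult_left_mono power_mono) auto
    finally show ?thesis .
  qed
  then show "\<exists>C. \<forall>k. \<bar>f k * a k\<bar> \<le> C * e ^ k" by blast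
qed

lemma superexp_decay_Suc:
  assumes "superexp_decay a"
  shows "superexp_decay (\<lambda>k. a (Suc k))"
  unfolding superexp_decay_def
proof (intro allI impI)
  fix e :: real
  assume "e > 0"
  then obtain C where C: "\<And>k. \<bar>a k\<bar> \<le> C * e ^ k"
    using assms superexp_decayD by metis
  have "\<bar>a (Suc k)\<bar> \<le> (C * e) * e ^ k" for k
    using C[of "Suc k"] by (simp add: mult.assoc)
  then show "\<exists>C. \<forall>k. \<bar>a (Suc k)\<bar> \<le> C * e ^ k" by blast
qed

lemma superexp_decay_minus_1:
  assumes "superexp_decay a"
  shows "superexp_decay (\<lambda>k. a (k - 1))"
  unfolding superexp_decay_def
proof (intro allI impI)
  fix e :: real
  assume "e > 0"
  then obtain C where "C \<ge> 0" and C: "\<And>k. \<bar>a k\<bar> \<le> C * e ^ k"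
    using assms superexp_decayD by metis
  have "\<bar>a (k - 1)\<bar> \<le> (C + C / e) * e ^ k" for k
  proof (cases k)
    case 0
    then show ?thesis
      using C[of 0] \<open>C \<ge> 0\<close> \<open>e > 0\<close> by (simp add: add_increasing2)
  next
    case (Suc m)
    then show ?thesis
      using C[of m] \<open>C \<ge> 0\<close> \<open>e > 0\<close> by (simp add: distrib_right add_increasing)
  qed
  then show "\<exists>C. \<forall>k. \<bar>a (k - 1)\<bar> \<le> C * e ^ k" by blast
qed

lemma superexp_decay_convolution:
  assumes "superexp_decay a" "superexp_decay b"
  shows "superexp_decay (\<lambda>n. \<Sum>i\<le>n. a i * b (n - i))"
  unfolding superexp_decay_def
proof (intro allI impI)
  fix e :: real
  assume "e > 0"
  then obtain C D where "C \<ge> 0" "D \<ge> 0"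
    and C: "\<And>k. \<bar>a k\<bar> \<le> C * (e / 2) ^ k" and D: "\<And>k. \<bar>b k\<bar> \<le> D * (e / 2) ^ k"
    using assms superexp_decayD[of _ "e / 2"] by (metis half_gt_zero)
  have "\<bar>\<Sum>i\<le>n. a i * b (n - i)\<bar> \<le> (C * D) * e ^ n" for n
  proof -
    have term_le: "\<bar>a i * b (n - i)\<bar> \<le> C * D * (e / 2) ^ n" if "i \<le> n" for i
    proof -
      have "\<bar>a i * b (n - i)\<bar> \<le> (C * (e / 2) ^ i) * (D * (e / 2) ^ (n - i))"
        unfolding abs_mult using C D \<open>C \<ge> 0\<close> \<open>e > 0\<close> by (intro mult_mono) auto
      also have "\<dots> = C * D * (e / 2) ^ n"
        using that by (simp add: power_add[symmetric] mult_ac)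
      finally show ?thesis .
    qed
    have "\<bar>\<Sum>i\<le>n. a i * b (n - i)\<bar> \<le> (\<Sum>i\<le>n. C * D * (e / 2) ^ n)"
      using term_le by (intro order_trans[OF sum_abs] sum_mono) auto
    also have "\<dots> = (C * D) * (real (Suc n) / 2 ^ n) * e ^ n"
      by (simp add: power_divide)
    also have "\<dots> \<le> (C * D) * 1 * e ^ n"
      using Suc_leI[OF less_exp[of n]] \<open>C \<ge> 0\<close> \<open>D \<ge> 0\<close> \<open>e > 0\<close>
      by (intro mult_right_mono mult_left_mono) (auto simp: divide_le_eq_1 simp del: of_nat_Suc)
    finally show ?thesis by simp
  qed
  then show "\<exists>C. \<forall>n. \<bar>\<Sum>i\<le>n. a i * b (n - i)\<bar> \<le> C * e ^ n" by blast
qed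

section \<open>Estimates for the double factorial\<close>

lemma dfact_pred_Suc_Suc: "dfact_pred (Suc (Suc k)) = Suc k * dfact_pred k"
  by (cases k) (auto simp: dfact_pred_def)

lemma dfact_pred_le_Suc: "dfact_pred k \<le> dfact_pred (Suc k)"
proof (induction k rule: dfact.induct)
  case (3 j)
  then have "Suc j * dfact_pred j \<le> Suc (Suc j) * dfact_pred (Suc j)"
    by (intro mult_le_mono) auto
  then show ?case
    by (simp only: dfact_pred_Suc_Suc)
qed (auto simp: dfact_pred_def)

lemma dfact_pred_times_Suc: "dfact_pred k * dfact_pred (Suc k) = fact k"
proof (induction k)
  case 0
  then show ?case by (simp add: dfact_pred_def)
next
  case (Suc k)
  have "dfact_pred (Suc k) * dfact_pred (Suc (Suc k)) = Suc k * (dfact_pred k * dfact_pred (Suc k))"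
    unfolding dfact_pred_Suc_Suc by (simp only: mult_ac)
  also have "\<dots> = fact (Suc k)"
    using Suc by (simp add: fact_Suc)
  finally show ?case .
qed

lemma dfact_pred_Suc_le: "dfact_pred (Suc k) \<le> Suc k * dfact_pred k"
proof (cases k)
  case (Suc m)
  have "dfact_pred (Suc k) = Suc m * dfact_pred m"
    using Suc dfact_pred_Suc_Suc by simp
  also have "\<dots> \<le> Suc k * dfact_pred (Suc m)"
    using dfact_pred_le_Suc[of m] Suc by (intro mult_le_mono) auto
  finally show ?thesis
    using Suc by simp
qed (simp add: dfact_pred_def)

lemma dfact_pred_square_le_fact: "dfact_pred k ^ 2 \<le> fact k"
  using mult_le_mono2[OF dfact_pred_le_Suc[of k], of "dfact_pred k"]
  unfolding dfact_pred_times_Suc power2_eq_square .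

lemma fact_le_dfact_pred_square: "fact k \<le> 2 ^ k * dfact_pred k ^ 2"
proof -
  have "(fact k :: nat) = dfact_pred k * dfact_pred (Suc k)"
    by (simp add: dfact_pred_times_Suc)
  also have "\<dots> \<le> dfact_pred k * (2 ^ k * dfact_pred k)"
  proof (rule mult_le_mono2)
    have "dfact_pred (Suc k) \<le> Suc k * dfact_pred k"
      by (rule dfact_pred_Suc_le)
    also have "\<dots> \<le> 2 ^ k * dfact_pred k"
      using Suc_leI[OF less_exp] by (rule mult_le_mono1)
    finally show "dfact_pred (Suc k) \<le> 2 ^ k * dfact_pred k" .
  qed
  finally show ?thesis
    by (simp add: power2_eq_square mult_ac)
qed

lemma dfact_pred_add_le: "dfact_pred (i + j) \<le> 2 ^ (i + j) * dfact_pred i * dfact_pred j"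
proof -
  have "dfact_pred (i + j) ^ 2 \<le> fact (i + j)"
    by (rule dfact_pred_square_le_fact)
  also have "\<dots> = ((i + j) choose i) * (fact i * fact j)"
    using binomial_fact_lemma[of i "i + j"] by (simp add: mult_ac)
  also have "\<dots> \<le> 2 ^ (i + j) * ((2 ^ i * dfact_pred i ^ 2) * (2 ^ j * dfact_pred j ^ 2))"
    by (intro mult_le_mono binomial_le_pow2 fact_le_dfact_pred_square)
  also have "\<dots> = (2 ^ (i + j) * dfact_pred i * dfact_pred j) ^ 2"
    by (simp add: power_add power_mult_distrib power2_eq_square mult_ac)
  finally show ?thesis
    by (rule power2_le_imp_le) simp
qed

section \<open>Closure properties of negligibility\<close>

lemma negligible_dfact_iff_superexp_decay:
  "negligible_dfact p \<longleftrightarrow> superexp_decay (\<lambda>k. \<bar>fps_nth p k\<bar> * real (dfact_pred k))"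
  unfolding negligible_dfact_def by (rule limsup_root_eq_0_iff_superexp_decay) simp

lemma negligible_dfact_add:
  assumes "negligible_dfact p" "negligible_dfact q"
  shows "negligible_dfact (p + q)"
proof -
  have "superexp_decay (\<lambda>k. \<bar>fps_nth p k\<bar> * real (dfact_pred k) + \<bar>fps_nth q k\<bar> * real (dfact_pred k))"
    using assms by (intro superexp_decay_add) (simp_all add: negligible_dfact_iff_superexp_decay)
  then show ?thesis
    unfolding negligible_dfact_iff_superexp_decay
  proof (rule superexp_decay_mono)
    fix k
    have "\<bar>fps_nth (p + q) k\<bar> * real (dfact_pred k) \<le> (\<bar>fps_nth p k\<bar> + \<bar>fps_nth q k\<bar>) * real (dfact_pred k)"
      by (intro mult_right_mono) (simp_all add: abs_triangle_ineq)
    then show "\<bar>\<bar>fps_nth (p + q) k\<bar> * real (dfact_pred k)\<bar>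
        \<le> \<bar>\<bar>fps_nth p k\<bar> * real (dfact_pred k) + \<bar>fps_nth q k\<bar> * real (dfact_pred k)\<bar>"
      by (simp add: algebra_simps)
  qed
qed

lemma negligible_dfact_cmult:
  assumes "negligible_dfact p"
  shows "negligible_dfact (fps_const c * p)"
proof -
  have "superexp_decay (\<lambda>k. c * (\<bar>fps_nth p k\<bar> * real (dfact_pred k)))"
    using assms unfolding negligible_dfact_iff_superexp_decay
    by (rule superexp_decay_mult_exp_bounded[where B = "\<bar>c\<bar>" and r = 1]) simp
  then show ?thesis
    unfolding negligible_dfact_iff_superexp_decay
    by (rule superexp_decay_mono) (simp add: abs_mult)
qed

lemma negligible_dfact_scale:
  assumes "negligible_dfact p"
  shows "negligible_dfact (Abs_fps (\<lambda>k. fps_nth p k * c ^ k))"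
proof -
  have "superexp_decay (\<lambda>k. c ^ k * (\<bar>fps_nth p k\<bar> * real (dfact_pred k)))"
    using assms unfolding negligible_dfact_iff_superexp_decay
    by (rule superexp_decay_mult_exp_bounded[where B = 1 and r = "\<bar>c\<bar>"]) (simp add: power_abs)
  then show ?thesis
    unfolding negligible_dfact_iff_superexp_decay
    by (rule superexp_decay_mono) (simp add: abs_mult)
qed

lemma negligible_dfact_abs: "negligible_dfact (fps_abs p) \<longleftrightarrow> negligible_dfact p"
  by (simp add: negligible_dfact_iff_superexp_decay fps_abs_def)

lemma negligible_dfact_const: "negligible_dfact (fps_const c)"
  unfolding negligible_dfact_iff_superexp_decay superexp_decay_def
  by (auto intro!: exI[of _ "\<bar>c\<bar>"] simp: dfact_pred_def)

lemma negligible_dfact_deriv: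
  assumes "negligible_dfact p"
  shows "negligible_dfact (fps_deriv p)"
proof -
  have "superexp_decay (\<lambda>k. real (Suc k) * (\<bar>fps_nth p (Suc k)\<bar> * real (dfact_pred (Suc k))))"
  proof (rule superexp_decay_mult_exp_bounded[where B = 1 and r = 2])
    show "superexp_decay (\<lambda>k. \<bar>fps_nth p (Suc k)\<bar> * real (dfact_pred (Suc k)))"
      using assms unfolding negligible_dfact_iff_superexp_decay by (rule superexp_decay_Suc)
    show "\<bar>real (Suc k)\<bar> \<le> 1 * 2 ^ k" for k
      using of_nat_mono[OF Suc_leI[OF less_exp[of k]], where 'a = real] by simp
  qed
  then show ?thesis
    unfolding negligible_dfact_iff_superexp_decay
  proof (rule superexp_decay_mono)
    fix k
    have "real (dfact_pred k) \<le> real (dfact_pred (Suc k))"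
      using dfact_pred_le_Suc by simp
    then have "\<bar>fps_nth (fps_deriv p) k\<bar> * real (dfact_pred k)
        \<le> real (Suc k) * (\<bar>fps_nth p (Suc k)\<bar> * real (dfact_pred (Suc k)))"
      by (simp add: abs_mult mult_left_mono del: of_nat_Suc)
    then show "\<bar>\<bar>fps_nth (fps_deriv p) k\<bar> * real (dfact_pred k)\<bar>
        \<le> \<bar>real (Suc k) * (\<bar>fps_nth p (Suc k)\<bar> * real (dfact_pred (Suc k)))\<bar>"
      by simp
  qed
qed

lemma negligible_dfact_integral:
  assumes "negligible_dfact p"
  shows "negligible_dfact (fps_integral0 p)"
proof -
  have "superexp_decay (\<lambda>k. \<bar>fps_nth p (k - 1)\<bar> * real (dfact_pred (k - 1)))"
    using assms unfolding negligible_dfact_iff_superexp_decay by (rule superexp_decay_minus_1)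
  then show ?thesis
    unfolding negligible_dfact_iff_superexp_decay
  proof (rule superexp_decay_mono)
    fix k
    show "\<bar>\<bar>fps_nth (fps_integral0 p) k\<bar> * real (dfact_pred k)\<bar>
        \<le> \<bar>\<bar>fps_nth p (k - 1)\<bar> * real (dfact_pred (k - 1))\<bar>"
    proof (cases k)
      case (Suc m)
      have "real (dfact_pred (Suc m)) \<le> real (dfact_pred m) * real (Suc m)"
        using of_nat_mono[OF dfact_pred_Suc_le[of m], where 'a = real]
        unfolding of_nat_mult mult.commute[of "real (Suc m)"] .
      then have "real (dfact_pred (Suc m)) / real (Suc m) \<le> real (dfact_pred m)"
        by (simp only: pos_divide_le_eq of_nat_0_less_iff zero_less_Suc)
      then have "\<bar>fps_nth p m\<bar> * (real (dfact_pred (Suc m)) / real (Suc m)) \<le> \<bar>fps_nth p m\<bar> * real (dfact_pred m)"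
        by (rule mult_left_mono) simp
      with Suc show ?thesis
        by (simp add: fps_integral_def abs_mult divide_inverse mult_ac del: of_nat_Suc)
    qed (simp add: fps_integral_def)
  qed
qed

lemma negligible_dfact_mult:
  assumes "negligible_dfact p" "negligible_dfact q"
  shows "negligible_dfact (p * q)"
proof -
  define a where "a k = \<bar>fps_nth p k\<bar> * real (dfact_pred k)" for k
  define b where "b k = \<bar>fps_nth q k\<bar> * real (dfact_pred k)" for k
  have "superexp_decay a" "superexp_decay b"
    using assms unfolding negligible_dfact_iff_superexp_decay a_def[abs_def] b_def[abs_def] .
  then have "superexp_decay (\<lambda>n. \<Sum>i\<le>n. a i * b (n - i))"
    by (rule superexp_decay_convolution)
  then have "superexp_decay (\<lambda>n. 2 ^ n * (\<Sum>i\<le>n. a i * b (n - i)))"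
    by (rule superexp_decay_mult_exp_bounded[where B = 1 and r = 2]) simp
  then show ?thesis
    unfolding negligible_dfact_iff_superexp_decay
  proof (rule superexp_decay_mono)
    fix n
    have "\<bar>fps_nth (p * q) n\<bar> * real (dfact_pred n)
        \<le> (\<Sum>i\<le>n. \<bar>fps_nth p i\<bar> * \<bar>fps_nth q (n - i)\<bar>) * real (dfact_pred n)"
      by (intro mult_right_mono)
        (simp_all add: fps_mult_nth atLeast0AtMost sum_abs[THEN order_trans] abs_mult)
    also have "\<dots> \<le> (\<Sum>i\<le>n. 2 ^ n * (a i * b (n - i)))"
      unfolding sum_distrib_right
    proof (rule sum_mono)
      fix i
      assume "i \<in> {..n}"
      then have "real (dfact_pred n) \<le> 2 ^ n * real (dfact_pred i) * real (dfact_pred (n - i))"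
        using of_nat_mono[OF dfact_pred_add_le[of i "n - i"], where 'a = real] by simp
      then have "\<bar>fps_nth p i\<bar> * \<bar>fps_nth q (n - i)\<bar> * real (dfact_pred n)
          \<le> \<bar>fps_nth p i\<bar> * \<bar>fps_nth q (n - i)\<bar> * (2 ^ n * real (dfact_pred i) * real (dfact_pred (n - i)))"
        by (rule mult_left_mono) simp
      then show "\<bar>fps_nth p i\<bar> * \<bar>fps_nth q (n - i)\<bar> * real (dfact_pred n) \<le> 2 ^ n * (a i * b (n - i))"
        unfolding a_def b_def by (simp only: mult_ac)
    qed
    finally show "\<bar>\<bar>fps_nth (p * q) n\<bar> * real (dfact_pred n)\<bar> \<le> \<bar>2 ^ n * (\<Sum>i\<le>n. a i * b (n - i))\<bar>"
      by (simp add: sum_distrib_left)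
  qed
qed

lemma negligible_dfact_alg_D:
  assumes "negligible_dfact p" "q \<in> alg_D p"
  shows "negligible_dfact q"
proof -
  have "negligible_dfact ((fps_deriv ^^ n) p)" for n
    by (induction n) (simp_all add: assms(1) negligible_dfact_deriv)
  with assms(2) show ?thesis
    by (induction rule: alg_D.induct) (simp_all add: negligible_dfact_const negligible_dfact_add negligible_dfact_mult)
qed

theorem lemma6p3:
  shows "(\<forall>p. negligible_dfact p \<longrightarrow> negligible_dfact (fps_integral p 0))
    \<and> (\<forall>p q. negligible_dfact p \<longrightarrow> negligible_dfact q \<longrightarrow> negligible_dfact (p + q))
    \<and> (\<forall>p. negligible_dfact p \<longrightarrow> negligible_dfact (fps_deriv p))
    \<and> (\<forall>p c. negligible_dfact p \<longrightarrow> negligible_dfact (fps_const c * p))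
    \<and> (\<forall>p q. negligible_dfact p \<longrightarrow> negligible_dfact q \<longrightarrow> negligible_dfact (p * q))
    \<and> (\<forall>p. negligible_dfact p \<longrightarrow> (\<forall>q \<in> alg_D p. negligible_dfact q))
    \<and> (\<forall>p (c::real). negligible_dfact p \<longrightarrow> negligible_dfact (Abs_fps (\<lambda>k. fps_nth p k * c ^ k)))
    \<and> (\<forall>p. negligible_dfact p \<longrightarrow> negligible_dfact (fps_abs p))"
  by (simp add: negligible_dfact_integral negligible_dfact_add negligible_dfact_deriv
      negligible_dfact_cmult negligible_dfact_mult negligible_dfact_alg_D negligible_dfact_scale
      negligible_dfact_abs)

end
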